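(* Let $\mathcal{V}$ be a finite set of nodes, $\mathcal{P}$ a finite set of labels with $|\mathcal{P}|\ge 2$, $\mathcal{E}$ a set of unordered pairs of nodes, $\theta_{ip}\in\mathbb{R}$, and associative pairwise potentials $\theta_{ij}(p,q)=-C_{ij,p}[p=q]$ with $C_{ij,p}\ge0$. Let $$L(\vec{y},\vec{\lambda})=\sum_{i\in\mathcal{V}}\sum_{p\in\mathcal{P}}\theta_{ip}y_{ip}-\sum_{\{i,j\}\in\mathcal{E}}\sum_{p\in\mathcal{P}}C_{ij,p}\,y_{ip}y_{jp}+\sum_{i\in\mathcal{V}}\lambda_i\Big(\sum_{p\in\mathcal{P}}y_{ip}-1\Big)$$ for $\vec y\in\{0,1\}^{\mathcal V\times\mathcal P}$, $\vec\lambda\in\mathbb{R}^{\mathcal V}$. Consider the following coordinate ascent algorithm started from any $\vec\lambda_0$: set $\vec\lambda:=\vec\lambda_0$; repeat the following pass until a pass makes no change: for each node $j\in\mathcal V$, compute for every $p\in\mathcal P$ the quantity $\delta^j_p=MM_{jp,0}-MM_{jp,1}$, where $MM_{jp,k}=\min\{L(\vec y,\vec\lambda):y_{jp}=k\}$ (with the current $\vec\lambda$); let $\delta^j_{(1)}$ be the largest of the $\delta^j_p$ (attained at $p^{(1)}_j$) and $\delta^j_{(2)}$ the largest over $p\ne p^{(1)}_j$; if $\delta^j_{(1)}$ and $\delta^j_{(2)}$ are of the same sign (both positive or both negative), set $\lambda_j:=\lambda_j+\tfrac12(\delta^j_{(1)}+\delta^j_{(2)})$ and mark the pass as having made a change.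 Then the point $\vec\lambda$ returned by the algorithm (upon termination) satisfies the weak agreement condition.
   Context: For $\vec\lambda\in\mathbb{R}^{\mathcal V}$, $i\in\mathcal V$, $p\in\mathcal P$, define $Z_{ip}(\vec\lambda)=\{z\in\{0,1\}:\ \exists\,\vec y^{\vec\lambda}\in\operatorname{Argmin}_{\vec y\in\{0,1\}^{\mathcal V\times\mathcal P}}L(\vec y,\vec\lambda)\text{ with }y^{\vec\lambda}_{ip}=z\}$. A point $\vec\lambda$ satisfies the weak agreement condition if for every node $i\in\mathcal V$: (1) there exists $p\in\mathcal P$ with $1\in Z_{ip}(\vec\lambda)$; and (2) for every $p\in\mathcal P$, if $Z_{ip}(\vec\lambda)=\{1\}$ then $0\in Z_{iq}(\vec\lambda)$ for all $q\ne p$. *)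

theory Defs
  imports Complex_Main
begin

text \<open>Labelings y in {0,1}^(V x P), represented as real-valued functions that are
  0/1-valued and vanish outside V x P.\<close>
definition Yset :: "'v set \<Rightarrow> 'p set \<Rightarrow> ('v \<Rightarrow> 'p \<Rightarrow> real) set" where
  "Yset V P = {y. (\<forall>i p. y i p \<in> {0, 1}) \<and> (\<forall>i p. (i \<notin> V \<or> p \<notin> P) \<longrightarrow> y i p = 0)}"

text \<open>Lagrangian L(y, lambda). An edge is an unordered pair e = {i,j}; y_ip y_jp is the
  product over i in e.\<close>
definition Lfun :: "'v set \<Rightarrow> 'p set \<Rightarrow> 'v set set \<Rightarrow> ('v \<Rightarrow> 'p \<Rightarrow> real) \<Rightarrow>
    ('v set \<Rightarrow> 'p \<Rightarrow> real) \<Rightarrow> ('v \<Rightarrow> 'p \<Rightarrow> real) \<Rightarrow> ('v \<Rightarrow> real) \<Rightarrow> real" where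
  "Lfun V P E \<theta> C y lam =
     (\<Sum>i\<in>V. \<Sum>p\<in>P. \<theta> i p * y i p)
     - (\<Sum>e\<in>E. \<Sum>p\<in>P. C e p * (\<Prod>i\<in>e. y i p))
     + (\<Sum>i\<in>V. lam i * ((\<Sum>p\<in>P. y i p) - 1))"

definition Argmin_L where
  "Argmin_L V P E \<theta> C lam =
     {y \<in> Yset V P. \<forall>y'\<in>Yset V P. Lfun V P E \<theta> C y lam \<le> Lfun V P E \<theta> C y' lam}"

definition Zset :: "'v set \<Rightarrow> 'p set \<Rightarrow> 'v set set \<Rightarrow> ('v \<Rightarrow> 'p \<Rightarrow> real) \<Rightarrow>
    ('v set \<Rightarrow> 'p \<Rightarrow> real) \<Rightarrow> ('v \<Rightarrow> real) \<Rightarrow> 'v \<Rightarrow> 'p \<Rightarrow> real set" where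
  "Zset V P E \<theta> C lam i p =
     {z \<in> {0, 1}. \<exists>y \<in> Argmin_L V P E \<theta> C lam. y i p = z}"

definition weak_agreement where
  "weak_agreement V P E \<theta> C lam \<longleftrightarrow>
     (\<forall>i\<in>V. (\<exists>p\<in>P. (1::real) \<in> Zset V P E \<theta> C lam i p) \<and>
        (\<forall>p\<in>P. Zset V P E \<theta> C lam i p = {1} \<longrightarrow>
            (\<forall>q\<in>P. q \<noteq> p \<longrightarrow> (0::real) \<in> Zset V P E \<theta> C lam i q)))"

definition MM where
  "MM V P E \<theta> C lam j p k =
     Min ((\<lambda>y. Lfun V P E \<theta> C y lam) ` {y \<in> Yset V P. y j p = k})"

definition delta where
  "delta V P E \<theta> C lam j p = MM V P E \<theta> C lam j p 0 - MM V P E \<theta> C lam j p 1"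

definition delta1 where
  "delta1 V P E \<theta> C lam j = Max (delta V P E \<theta> C lam j ` P)"

text \<open>A label attaining the largest delta (the value of delta2 does not depend on the choice).\<close>
definition p1 where
  "p1 V P E \<theta> C lam j = (SOME p. p \<in> P \<and> delta V P E \<theta> C lam j p = delta1 V P E \<theta> C lam j)"

definition delta2 where
  "delta2 V P E \<theta> C lam j = Max (delta V P E \<theta> C lam j ` (P - {p1 V P E \<theta> C lam j}))"

definition same_sign :: "real \<Rightarrow> real \<Rightarrow> bool" where
  "same_sign a b \<longleftrightarrow> (a > 0 \<and> b > 0) \<or> (a < 0 \<and> b < 0)"

text \<open>Processing node j within a pass; the boolean records whether the pass made a change.\<close>
definition node_step where
  "node_step V P E \<theta> C j st =
     (let lam = fst st; d1 = delta1 V P E \<theta> C lam j; d2 = delta2 V P E \<theta> C lam j in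
      if same_sign d1 d2 then (lam(j := lam j + (d1 + d2) / 2), True) else st)"

definition ca_pass where
  "ca_pass V P E \<theta> C js lam = fold (node_step V P E \<theta> C) js (lam, False)"

end

theory Submission
  imports Defs
begin

text \<open>When a pass changes nothing, no node has its two largest min-marginal differences
  \<open>\<delta>\<^sub>1 \<ge> \<delta>\<^sub>2\<close> of the same sign, so \<open>\<delta>\<^sub>1 \<ge> 0 \<ge> \<delta>\<^sub>2\<close>. A label \<open>p\<close> takes the value \<open>1\<close> in some
  minimiser of \<open>L\<close> iff \<open>MM\<^sub>p\<^sub>,\<^sub>1 \<le> MM\<^sub>p\<^sub>,\<^sub>0\<close>, i.e. \<open>\<delta>\<^sub>p \<ge> 0\<close>, and the value \<open>0\<close> iff \<open>\<delta>\<^sub>p \<le> 0\<close>. Hence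
  the maximising label can be \<open>1\<close>; a label forced to \<open>1\<close> has \<open>\<delta>\<^sub>p > 0 \<ge> \<delta>\<^sub>2\<close> and so is the
  maximising one; and every other label has \<open>\<delta>\<^sub>q \<le> \<delta>\<^sub>2 \<le> 0\<close> and can be \<open>0\<close>.\<close>

lemma snd_fold_node_step_mono:
  "snd st \<Longrightarrow> snd (fold (node_step V P E \<theta> C) js st)"
proof (induction js arbitrary: st)
  case Nil
  then show ?case by simp
next
  case (Cons j js)
  then have "snd (node_step V P E \<theta> C j st)"
    by (auto simp: node_step_def Let_def)
  then show ?case using Cons.IH by simp
qed

lemma ca_pass_unchanged:
  assumes "\<not> snd (ca_pass V P E \<theta> C js lam)"
  shows "fst (ca_pass V P E \<theta> C js lam) = lam \<and>
    (\<forall>j\<in>set js. \<not> same_sign (delta1 V P E \<theta> C lam j) (delta2 V P E \<theta> C lam j))"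
  using assms unfolding ca_pass_def
proof (induction js)
  case (Cons j js)
  show ?case
  proof (cases "same_sign (delta1 V P E \<theta> C lam j) (delta2 V P E \<theta> C lam j)")
    case True
    then have "snd (node_step V P E \<theta> C j (lam, False))"
      by (simp add: node_step_def Let_def)
    then have "snd (fold (node_step V P E \<theta> C) js (node_step V P E \<theta> C j (lam, False)))"
      by (rule snd_fold_node_step_mono)
    then show ?thesis using Cons.prems by simp
  next
    case False
    then have "node_step V P E \<theta> C j (lam, False) = (lam, False)"
      by (simp add: node_step_def Let_def)
    then show ?thesis using Cons False by simp
  qed
qed simp

lemma finite_Yset:
  assumes "finite V" "finite P"
  shows "finite (Yset V P)"
proof -
  let ?ind = "\<lambda>S i p. if (i, p) \<in> S then 1 else 0 :: real"
  have "Yset V P \<subseteq> ?ind ` Pow (V \<times> P)"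
  proof
    fix y assume y: "y \<in> Yset V P"
    have "y = ?ind {(i, p). i \<in> V \<and> p \<in> P \<and> y i p = 1}"
      using y unfolding Yset_def by (fastforce intro!: ext)
    then show "y \<in> ?ind ` Pow (V \<times> P)" by blast
  qed
  then show ?thesis
    using assms by (meson finite_Pow_iff finite_SigmaI finite_imageI finite_subset)
qed

lemma MM_le:
  assumes "finite V" "finite P" "y \<in> Yset V P" "y j p = k"
  shows "MM V P E \<theta> C lam j p k \<le> Lfun V P E \<theta> C y lam"
proof -
  have "finite (Yset V P)" using assms(1,2) by (rule finite_Yset)
  then show ?thesis
    unfolding MM_def using assms(3,4) by (intro Min_le) auto
qed

lemma MM_attained:
  assumes "finite V" "finite P" "j \<in> V" "p \<in> P" "k \<in> {0, 1}"
  obtains y where "y \<in> Yset V P" "y j p = k" "Lfun V P E \<theta> C y lam = MM V P E \<theta> C lam j p k"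
proof -
  let ?A = "{y \<in> Yset V P. y j p = k}"
  have "finite ?A" using finite_Yset[OF assms(1,2)] by simp
  moreover have "(\<lambda>i q. if i = j \<and> q = p then k else 0) \<in> ?A"
    using assms(3-5) unfolding Yset_def by auto
  ultimately have "MM V P E \<theta> C lam j p k \<in> (\<lambda>y. Lfun V P E \<theta> C y lam) ` ?A"
    unfolding MM_def by (intro Min_in) auto
  then obtain y where "y \<in> ?A" "MM V P E \<theta> C lam j p k = Lfun V P E \<theta> C y lam"
    by (rule imageE)
  then show ?thesis by (intro that) simp_all
qed

lemma mem_Zset_iff_MM_le:
  assumes fin: "finite V" "finite P" and j: "j \<in> V" and p: "p \<in> P" and k: "k \<in> {0, 1}"
  shows "k \<in> Zset V P E \<theta> C lam j p \<longleftrightarrow>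
         MM V P E \<theta> C lam j p k \<le> MM V P E \<theta> C lam j p (1 - k)"
proof
  assume "k \<in> Zset V P E \<theta> C lam j p"
  then obtain y where y: "y \<in> Argmin_L V P E \<theta> C lam" "y j p = k"
    unfolding Zset_def by auto
  have "1 - k \<in> {0, 1}" using k by auto
  then obtain y' where y': "y' \<in> Yset V P" "y' j p = 1 - k"
      "Lfun V P E \<theta> C y' lam = MM V P E \<theta> C lam j p (1 - k)"
    by (rule MM_attained[OF fin j p])
  have "MM V P E \<theta> C lam j p k \<le> Lfun V P E \<theta> C y lam"
    using y fin by (intro MM_le) (auto simp: Argmin_L_def)
  also have "\<dots> \<le> Lfun V P E \<theta> C y' lam"
    using y y' unfolding Argmin_L_def by auto
  finally show "MM V P E \<theta> C lam j p k \<le> MM V P E \<theta> C lam j p (1 - k)"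
    using y' by simp
next
  assume le: "MM V P E \<theta> C lam j p k \<le> MM V P E \<theta> C lam j p (1 - k)"
  obtain y where y: "y \<in> Yset V P" "y j p = k"
      "Lfun V P E \<theta> C y lam = MM V P E \<theta> C lam j p k"
    using MM_attained[OF fin j p k] .
  have "Lfun V P E \<theta> C y lam \<le> Lfun V P E \<theta> C y' lam" if y': "y' \<in> Yset V P" for y'
  proof -
    have "y' j p \<in> {0, 1}" using y' unfolding Yset_def by blast
    then have "y' j p = k \<or> y' j p = 1 - k" using k by auto
    then show ?thesis
    proof
      assume "y' j p = k"
      from MM_le[OF fin y' this, of E \<theta> C lam] show ?thesis using y by simp
    next
      assume "y' j p = 1 - k"
      from MM_le[OF fin y' this, of E \<theta> C lam] show ?thesis using le y by simp
    qed
  qed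
  then have "y \<in> Argmin_L V P E \<theta> C lam"
    using y unfolding Argmin_L_def by blast
  then show "k \<in> Zset V P E \<theta> C lam j p"
    unfolding Zset_def using y(2) k by blast
qed

lemma one_mem_Zset_iff:
  assumes "finite V" "finite P" "j \<in> V" "p \<in> P"
  shows "1 \<in> Zset V P E \<theta> C lam j p \<longleftrightarrow> delta V P E \<theta> C lam j p \<ge> 0"
  using mem_Zset_iff_MM_le[OF assms, where k = 1] by (simp add: delta_def)

lemma zero_mem_Zset_iff:
  assumes "finite V" "finite P" "j \<in> V" "p \<in> P"
  shows "0 \<in> Zset V P E \<theta> C lam j p \<longleftrightarrow> delta V P E \<theta> C lam j p \<le> 0"
  using mem_Zset_iff_MM_le[OF assms, where k = 0] by (simp add: delta_def)

context
  fixes V :: "'v set" and P :: "'p set" and E :: "'v set set"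
    and \<theta> :: "'v \<Rightarrow> 'p \<Rightarrow> real" and C :: "'v set \<Rightarrow> 'p \<Rightarrow> real"
    and lam :: "'v \<Rightarrow> real" and j :: 'v
  assumes fin: "finite P" and card_P: "card P \<ge> 2"
begin

lemma delta_le_delta1: "q \<in> P \<Longrightarrow> delta V P E \<theta> C lam j q \<le> delta1 V P E \<theta> C lam j"
  unfolding delta1_def using fin by (intro Max_ge) auto

lemma p1_mem_and_delta_p1:
  "p1 V P E \<theta> C lam j \<in> P \<and>
   delta V P E \<theta> C lam j (p1 V P E \<theta> C lam j) = delta1 V P E \<theta> C lam j"
proof -
  have "P \<noteq> {}" using card_P by auto
  then have "delta1 V P E \<theta> C lam j \<in> delta V P E \<theta> C lam j ` P"
    unfolding delta1_def using fin by (intro Max_in) auto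
  then have "\<exists>q. q \<in> P \<and> delta V P E \<theta> C lam j q = delta1 V P E \<theta> C lam j"
    by (metis imageE)
  then show ?thesis unfolding p1_def by (rule someI_ex)
qed

lemma P_minus_p1_nonempty: "P - {p1 V P E \<theta> C lam j} \<noteq> {}"
proof
  assume "P - {p1 V P E \<theta> C lam j} = {}"
  then have "card P \<le> card {p1 V P E \<theta> C lam j}" by (intro card_mono) auto
  then show False using card_P by simp
qed

lemma delta_le_delta2:
  "q \<in> P \<Longrightarrow> q \<noteq> p1 V P E \<theta> C lam j \<Longrightarrow>
   delta V P E \<theta> C lam j q \<le> delta2 V P E \<theta> C lam j"
  unfolding delta2_def using fin by (intro Max_ge) auto

lemma delta2_le_delta1: "delta2 V P E \<theta> C lam j \<le> delta1 V P E \<theta> C lam j"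
proof -
  have "delta2 V P E \<theta> C lam j \<in> delta V P E \<theta> C lam j ` (P - {p1 V P E \<theta> C lam j})"
    unfolding delta2_def using fin P_minus_p1_nonempty by (intro Max_in) auto
  then show ?thesis using delta_le_delta1 by (metis DiffD1 imageE)
qed

end

lemma weak_agreement_if_not_same_sign:
  assumes fin: "finite V" "finite P" and card_P: "card P \<ge> 2"
    and not_same: "\<forall>j\<in>V. \<not> same_sign (delta1 V P E \<theta> C lam j) (delta2 V P E \<theta> C lam j)"
  shows "weak_agreement V P E \<theta> C lam"
  unfolding weak_agreement_def
proof (intro ballI conjI impI)
  fix i assume i: "i \<in> V"
  let ?d = "delta V P E \<theta> C lam i" and ?q1 = "p1 V P E \<theta> C lam i"
  have q1: "?q1 \<in> P \<and> ?d ?q1 = delta1 V P E \<theta> C lam i"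
    by (rule p1_mem_and_delta_p1[OF fin(2) card_P])
  have "delta2 V P E \<theta> C lam i \<le> delta1 V P E \<theta> C lam i"
    by (rule delta2_le_delta1[OF fin(2) card_P])
  then have signs: "delta1 V P E \<theta> C lam i \<ge> 0" "delta2 V P E \<theta> C lam i \<le> 0"
    using not_same i unfolding same_sign_def by auto
  have others: "?d q \<le> 0" if "q \<in> P" "q \<noteq> ?q1" for q
    using delta_le_delta2[OF fin(2) card_P that] signs(2) by linarith
  have "1 \<in> Zset V P E \<theta> C lam i ?q1"
    using q1 signs(1) one_mem_Zset_iff[OF fin i] by simp
  then show "\<exists>p\<in>P. 1 \<in> Zset V P E \<theta> C lam i p"
    using q1 by blast
  fix p assume p: "p \<in> P" and forced: "Zset V P E \<theta> C lam i p = {1}"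
  have "p = ?q1"
  proof (rule ccontr)
    assume "p \<noteq> ?q1"
    then have "0 \<in> Zset V P E \<theta> C lam i p"
      using others[OF p] zero_mem_Zset_iff[OF fin i p] by simp
    then show False using forced by simp
  qed
  fix q assume q: "q \<in> P" "q \<noteq> p"
  with \<open>p = ?q1\<close> show "0 \<in> Zset V P E \<theta> C lam i q"
    using others zero_mem_Zset_iff[OF fin i] by simp
qed

text \<open>The hypotheses on \<open>E\<close> and on \<open>C \<ge> 0\<close> only matter for termination of the
  algorithm; at termination weak agreement holds for arbitrary pairwise terms.\<close>

theorem theorem3:
  fixes V :: "'v set" and P :: "'p set" and E :: "'v set set"
    and \<theta> :: "'v \<Rightarrow> 'p \<Rightarrow> real" and C :: "'v set \<Rightarrow> 'p \<Rightarrow> real"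
    and lam0 :: "'v \<Rightarrow> real" and js :: "'v list" and n :: nat
  assumes "finite V" and "finite P" and "card P \<ge> 2"
    and "\<forall>e\<in>E. \<exists>i j. i \<in> V \<and> j \<in> V \<and> i \<noteq> j \<and> e = {i, j}"
    and "\<forall>e\<in>E. \<forall>p\<in>P. C e p \<ge> 0"
    and "distinct js" and "set js = V"
    and "\<forall>m<n. snd (ca_pass V P E \<theta> C js (((fst \<circ> ca_pass V P E \<theta> C js) ^^ m) lam0))"
    and "\<not> snd (ca_pass V P E \<theta> C js (((fst \<circ> ca_pass V P E \<theta> C js) ^^ n) lam0))"
  shows "weak_agreement V P E \<theta> C
           (fst (ca_pass V P E \<theta> C js (((fst \<circ> ca_pass V P E \<theta> C js) ^^ n) lam0)))"
proof -
  define lam where "lam = ((fst \<circ> ca_pass V P E \<theta> C js) ^^ n) lam0"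
  have unchanged: "\<not> snd (ca_pass V P E \<theta> C js lam)"
    using assms(9) unfolding lam_def .
  have fixed: "fst (ca_pass V P E \<theta> C js lam) = lam"
    and not_same: "\<forall>j\<in>V. \<not> same_sign (delta1 V P E \<theta> C lam j) (delta2 V P E \<theta> C lam j)"
    using ca_pass_unchanged[OF unchanged] assms(7) by simp_all
  have "weak_agreement V P E \<theta> C lam"
    using weak_agreement_if_not_same_sign[OF assms(1-3) not_same] .
  then show ?thesis
    using fixed unfolding lam_def by simp
qed

end
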